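(* Let $f$ be a Hamiltonian stationary torus. For every monochromatic holomorphic section $\alpha$ there is a unique $\mu\in\mathbb C_*$ such that $\alpha$ is $d^\mu$--parallel.
   Context: Identify $\mathbb R^4$ with $\mathbb H$ and $\mathbb C$ with $\mathrm{span}_{\mathbb R}\{1,i\}$; $\langle\cdot,\cdot\rangle$ is the Euclidean inner product on $\mathbb C\cong\mathbb R^2$. $\Gamma\subset\mathbb C$ a lattice, $\Gamma^*$ its dual lattice. A Hamiltonian stationary torus is a $\Gamma$-periodic conformal immersion $f:\mathbb C\to\mathbb H$ with $df=e^{j\beta/2}dz\,g$, $dz=dx+i\,dy$, $g$ nowhere zero, $\beta(z)=2\pi\langle\beta_0,z\rangle$, $0\ne\beta_0\in\Gamma^*$; convention $*dz=i\,dz$; left normal $N=e^{j\beta}i$. With $(dN)'=\frac12(dN-N*dN)$ define $H$ by $(dN)'=-df\,H$. For $\mu\in\mathbb C_*$, $d^\mu\alpha=d\alpha+\frac12df\,H\,(N\alpha(a-1)+\alpha b)$, $a=\frac{\mu+\mu^{-1}}2$, $b=\frac{\mu^{-1}-\mu}2i$ (acting from the right). With $h^{A,B}(\gamma)=e^{2\pi(\langle A,\gamma\rangle-i\langle B,\gamma\rangle)}$, $\Gamma^*_{A,B}=\{\delta\in\Gamma^*+\frac{\beta_0}2:|\delta-B|^2-|A|^2=\frac{|\beta_0|^2}4,\ \langle\delta-B,A\rangle=0\}$, $e_\delta(z)=e^{2\pi i\langle\delta,z\rangle}$, $\lambda_\delta=\frac2{\beta_0}(\delta-iA-B)$: a monochromatic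 holomorphic section is a nonzero complex multiple (on the right) of $e^{j\beta/2}(1-k\lambda_\delta)e_{\delta-B}e^{2\pi\langle A,\cdot\rangle}$ for some $(A,B)\in\mathbb C^2$ and $\delta\in\Gamma^*_{A,B}$. *)

theory Defs
  imports "HOL-Analysis.Analysis"
begin

text \<open>We model the quaternions H = R^4 as pairs of complex numbers, (a, b) standing for
  a + j b with a, b in C = span{1,i}.  This identifies C with span{1,i} (as the pairs (z,0)),
  and the real vector space / norm structure is the Euclidean one on R^4.
  Using a j = j (cnj a), the product is
  (a + j b)(c + j d) = (a c - cnj b d) + j (cnj a d + b c).\<close>

type_synonym quat = "complex \<times> complex"

definition qmul :: "quat \<Rightarrow> quat \<Rightarrow> quat" where
  "qmul p q = (fst p * fst q - cnj (snd p) * snd q, cnj (fst p) * snd q + snd p * fst q)"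

definition of_cplx :: "complex \<Rightarrow> quat" where
  "of_cplx z = (z, 0)"

definition qone :: quat where "qone = (1, 0)"
definition qi :: quat where "qi = (\<i>, 0)"
definition qj :: quat where "qj = (0, 1)"
definition qk :: quat where "qk = qmul qi qj"   \<comment> \<open>= (0, - i)\<close>

definition qexpj :: "real \<Rightarrow> quat" where
  "qexpj t = (complex_of_real (cos t), complex_of_real (sin t))"

definition lattice :: "complex set \<Rightarrow> bool" where
  "lattice \<Gamma> \<longleftrightarrow> (\<exists>\<omega>1 \<omega>2. Im (cnj \<omega>1 * \<omega>2) \<noteq> 0 \<and>
      \<Gamma> = {of_int m * \<omega>1 + of_int n * \<omega>2 | m n. True})"

text \<open>Dual lattice w.r.t. the Euclidean inner product on C = R^2 (x \<bullet> y = Re (x * cnj y)).\<close>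
definition dual_lattice :: "complex set \<Rightarrow> complex set" where
  "dual_lattice \<Gamma> = {\<delta>. \<forall>\<gamma>\<in>\<Gamma>. \<delta> \<bullet> \<gamma> \<in> \<int>}"

definition hs_beta :: "complex \<Rightarrow> complex \<Rightarrow> real" where
  "hs_beta \<beta>0 z = 2 * pi * (\<beta>0 \<bullet> z)"

text \<open>f is a Hamiltonian stationary torus w.r.t. the lattice Gamma, with data beta0 and g:
  Gamma-periodic, df = e^{j beta/2} dz g with g nowhere zero (this makes f a conformal immersion).\<close>
definition ham_stat_torus ::
    "complex set \<Rightarrow> complex \<Rightarrow> (complex \<Rightarrow> quat) \<Rightarrow> (complex \<Rightarrow> quat) \<Rightarrow> bool" where
  "ham_stat_torus \<Gamma> \<beta>0 f g \<longleftrightarrow>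
     lattice \<Gamma> \<and> \<beta>0 \<in> dual_lattice \<Gamma> \<and> \<beta>0 \<noteq> 0 \<and>
     (\<forall>\<gamma>\<in>\<Gamma>. \<forall>z. f (z + \<gamma>) = f z) \<and>
     (\<forall>z. g z \<noteq> 0) \<and>
     (\<forall>z. (f has_derivative
            (\<lambda>v. qmul (qmul (qexpj (hs_beta \<beta>0 z / 2)) (of_cplx v)) (g z))) (at z))"

definition hs_N :: "complex \<Rightarrow> complex \<Rightarrow> quat" where
  "hs_N \<beta>0 z = qmul (qexpj (hs_beta \<beta>0 z)) qi"

text \<open>Quaternion-valued 1-forms on C are modelled as functions (point z, tangent vector v).  Hodge star with the
  convention *dz = i dz: ( *w)_z(v) = w_z(i v).\<close>
definition dform :: "(complex \<Rightarrow> quat) \<Rightarrow> complex \<Rightarrow> complex \<Rightarrow> quat" where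
  "dform F z v = frechet_derivative F (at z) v"

definition hodge :: "(complex \<Rightarrow> complex \<Rightarrow> quat) \<Rightarrow> complex \<Rightarrow> complex \<Rightarrow> quat" where
  "hodge w z v = w z (\<i> * v)"

definition dN_prime :: "complex \<Rightarrow> complex \<Rightarrow> complex \<Rightarrow> quat" where
  "dN_prime \<beta>0 z v = (1/2::real) *\<^sub>R
     (dform (hs_N \<beta>0) z v - qmul (hs_N \<beta>0 z) (hodge (dform (hs_N \<beta>0)) z v))"

definition hs_H :: "complex \<Rightarrow> (complex \<Rightarrow> quat) \<Rightarrow> complex \<Rightarrow> quat" where
  "hs_H \<beta>0 f z = (THE h. \<forall>v. dN_prime \<beta>0 z v = - qmul (dform f z v) h)"

definition mu_a :: "complex \<Rightarrow> complex" where "mu_a \<mu> = (\<mu> + inverse \<mu>) / 2"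
definition mu_b :: "complex \<Rightarrow> complex" where "mu_b \<mu> = (inverse \<mu> - \<mu>) / 2 * \<i>"

definition d_mu :: "complex \<Rightarrow> (complex \<Rightarrow> quat) \<Rightarrow> complex \<Rightarrow> (complex \<Rightarrow> quat)
                    \<Rightarrow> complex \<Rightarrow> complex \<Rightarrow> quat" where
  "d_mu \<beta>0 f \<mu> \<alpha> z v = dform \<alpha> z v + (1/2::real) *\<^sub>R
     qmul (qmul (dform f z v) (hs_H \<beta>0 f z))
       (qmul (qmul (hs_N \<beta>0 z) (\<alpha> z)) (of_cplx (mu_a \<mu> - 1)) + qmul (\<alpha> z) (of_cplx (mu_b \<mu>)))"

definition d_mu_parallel :: "complex \<Rightarrow> (complex \<Rightarrow> quat) \<Rightarrow> complex \<Rightarrow> (complex \<Rightarrow> quat) \<Rightarrow> bool" where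
  "d_mu_parallel \<beta>0 f \<mu> \<alpha> \<longleftrightarrow>
     (\<forall>z. \<alpha> differentiable (at z)) \<and> (\<forall>z v. d_mu \<beta>0 f \<mu> \<alpha> z v = 0)"

definition Gamma_AB :: "complex set \<Rightarrow> complex \<Rightarrow> complex \<Rightarrow> complex \<Rightarrow> complex set" where
  "Gamma_AB \<Gamma> \<beta>0 A B = {\<delta>. (\<exists>\<gamma>'\<in>dual_lattice \<Gamma>. \<delta> = \<gamma>' + \<beta>0 / 2) \<and>
      (cmod (\<delta> - B))\<^sup>2 - (cmod A)\<^sup>2 = (cmod \<beta>0)\<^sup>2 / 4 \<and> (\<delta> - B) \<bullet> A = 0}"

definition e_char :: "complex \<Rightarrow> complex \<Rightarrow> complex" where
  "e_char \<delta> z = exp (2 * pi * \<i> * complex_of_real (\<delta> \<bullet> z))"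

definition lambda_delta :: "complex \<Rightarrow> complex \<Rightarrow> complex \<Rightarrow> complex \<Rightarrow> complex" where
  "lambda_delta \<beta>0 A B \<delta> = 2 / \<beta>0 * (\<delta> - \<i> * A - B)"

definition monochromatic :: "complex set \<Rightarrow> complex \<Rightarrow> (complex \<Rightarrow> quat) \<Rightarrow> bool" where
  "monochromatic \<Gamma> \<beta>0 \<alpha> \<longleftrightarrow>
     (\<exists>A B \<delta> c. \<delta> \<in> Gamma_AB \<Gamma> \<beta>0 A B \<and> c \<noteq> 0 \<and>
        \<alpha> = (\<lambda>z. qmul (qmul (qmul (qmul (qexpj (hs_beta \<beta>0 z / 2))
                     (qone - qmul qk (of_cplx (lambda_delta \<beta>0 A B \<delta>))))
                     (of_cplx (e_char (\<delta> - B) z)))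
                     (of_cplx (complex_of_real (exp (2 * pi * (A \<bullet> z))))))
                     (of_cplx c)))"

end

theory Submission
  imports Defs
begin

text \<open>Write \<open>C = cos (\<pi> \<beta>0\<cdot>z)\<close> and \<open>S = sin (\<pi> \<beta>0\<cdot>z)\<close>, so that \<open>e^(j\<beta>/2) = C + j S\<close>.
  Differentiating \<open>N = e^(j\<beta>) i\<close> gives \<open>(dN)' = - e^(j\<beta>/2) dz X\<close> for an explicit quaternion
  \<open>X\<close> (\<open>hopf_X\<close>), hence \<open>H = g\<inverse> X\<close>, and \<open>df H = e^(j\<beta>/2) dz X\<close> no longer involves \<open>g\<close>.
  A monochromatic section is \<open>(C - i\<lambda>S + j (i\<lambda>C + S)) \<phi>\<close> for a complex exponential \<open>\<phi>\<close>,
  so \<open>d\<^sup>\<mu>\<alpha>\<close> is an explicit polynomial in \<open>C, S, \<lambda>, \<mu>, \<mu>\<inverse>\<close> times \<open>\<phi>\<close>.  The two conditions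
  defining \<open>\<Gamma>*_{A,B}\<close> amount to the single complex relation
  \<open>(\<delta> - B - iA) conj (\<delta> - B + iA) = |\<beta>0|\<^sup>2/4\<close> for \<open>\<lambda>\<beta>0 = 2 (\<delta> - B - iA)\<close>; together with
  \<open>C\<^sup>2 + S\<^sup>2 = 1\<close> it makes \<open>d\<^sup>\<mu>\<alpha>\<close> vanish identically for \<open>\<mu> = \<lambda>\<^sup>-\<^sup>2\<close>, while at \<open>z = 0\<close> the
  \<open>j\<close>-part of \<open>d\<^sup>\<mu>\<alpha>\<close> is a nonzero multiple of \<open>\<mu>\<inverse> - \<lambda>\<^sup>2\<close>.\<close>

abbreviation cr :: "real \<Rightarrow> complex" where "cr \<equiv> complex_of_real"

lemma of_real_inner_complex: "cr (x \<bullet> y) = (x * cnj y + cnj x * y) / 2"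
  by (simp add: inner_complex_def complex_eq_iff)

lemma qmul_assoc: "qmul (qmul p q) r = qmul p (qmul q r)"
  by (simp add: qmul_def algebra_simps)

lemma qmul_zero_right [simp]: "qmul p 0 = 0"
  by (simp add: qmul_def zero_prod_def)

lemma qmul_qone_left [simp]: "qmul qone p = p"
  by (simp add: qmul_def qone_def)

definition qnorm2 :: "quat \<Rightarrow> complex" where
  "qnorm2 p = fst p * cnj (fst p) + snd p * cnj (snd p)"

definition qinv :: "quat \<Rightarrow> quat" where
  "qinv p = (cnj (fst p) / qnorm2 p, - snd p / qnorm2 p)"

lemma qnorm2_nonzero:
  assumes "p \<noteq> 0"
  shows "qnorm2 p \<noteq> 0"
proof
  assume "qnorm2 p = 0"
  then have "(cmod (fst p))\<^sup>2 + (cmod (snd p))\<^sup>2 = 0"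
    by (metis qnorm2_def complex_norm_square of_real_add of_real_eq_0_iff)
  then have "fst p = 0 \<and> snd p = 0"
    by (metis add_nonneg_eq_0_iff norm_eq_zero zero_le_power2 power_eq_0_iff)
  with assms show False
    by (simp add: prod_eq_iff)
qed

lemma qmul_qinv_left:
  assumes "p \<noteq> 0"
  shows "qmul (qinv p) p = qone"
proof -
  have "cnj (qnorm2 p) = qnorm2 p"
    by (simp add: qnorm2_def)
  with qnorm2_nonzero [OF assms] show ?thesis
    unfolding qmul_def qinv_def qone_def by (simp add: field_simps qnorm2_def [symmetric])
qed

lemma qmul_qinv_right:
  assumes "p \<noteq> 0"
  shows "qmul p (qinv p) = qone"
  using qnorm2_nonzero [OF assms] unfolding qmul_def qinv_def qone_def
  by (simp add: field_simps) (simp add: qnorm2_def algebra_simps)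

lemma qmul_qinv_right_cancel: "p \<noteq> 0 \<Longrightarrow> qmul p (qmul (qinv p) q) = q"
  by (metis qmul_qinv_right qmul_assoc qmul_qone_left)

lemma qmul_left_cancel: "p \<noteq> 0 \<Longrightarrow> qmul p q = qmul p r \<Longrightarrow> q = r"
  by (metis qmul_qinv_left qmul_assoc qmul_qone_left)

lemma qmul_nonzero: "p \<noteq> 0 \<Longrightarrow> q \<noteq> 0 \<Longrightarrow> qmul p q \<noteq> 0"
  by (metis qmul_qinv_left qmul_assoc qmul_qone_left qmul_zero_right)

lemma dform_eq_derivative:
  assumes "(f has_derivative F) (at z)"
  shows "dform f z v = F v"
  using frechet_derivative_at [OF assms] by (simp add: dform_def)

lemma qexpj_half_beta:
  "qexpj (hs_beta b0 z / 2) = (cr (cos (pi * (b0 \<bullet> z))), cr (sin (pi * (b0 \<bullet> z))))"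
  by (simp add: qexpj_def hs_beta_def)

lemma hs_N_eq: "hs_N b0 = (\<lambda>z. (\<i> * cr (cos (hs_beta b0 z)), \<i> * cr (sin (hs_beta b0 z))))"
  by (auto simp: hs_N_def qmul_def qexpj_def qi_def)

lemma hs_beta_double: "hs_beta b0 z = 2 * (pi * (b0 \<bullet> z))"
  by (simp add: hs_beta_def)

lemma hs_N_half_angle:
  "hs_N b0 z = (\<i> * cr ((cos (pi * (b0 \<bullet> z)))\<^sup>2 - (sin (pi * (b0 \<bullet> z)))\<^sup>2),
                \<i> * cr (2 * sin (pi * (b0 \<bullet> z)) * cos (pi * (b0 \<bullet> z))))"
  unfolding hs_N_eq hs_beta_double cos_double sin_double ..

lemma hs_N_has_derivative:
  "(hs_N b0 has_derivative (\<lambda>v. (- \<i> * cr (sin (hs_beta b0 z)) * cr (2 * pi * (b0 \<bullet> v)),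
                                  \<i> * cr (cos (hs_beta b0 z)) * cr (2 * pi * (b0 \<bullet> v))))) (at z)"
  unfolding hs_N_eq hs_beta_def
  by (rule has_derivative_eq_rhs, (rule derivative_eq_intros refl)+, auto simp: algebra_simps)

lemma dN_prime_identity:
  fixes cn sn :: real and b0 v :: complex
  assumes "cn\<^sup>2 + sn\<^sup>2 = 1"
  shows "(1/2::real) *\<^sub>R
      ((- \<i> * cr (2 * sn * cn) * cr (2 * pi * (b0 \<bullet> v)), \<i> * cr (cn\<^sup>2 - sn\<^sup>2) * cr (2 * pi * (b0 \<bullet> v)))
       - qmul (\<i> * cr (cn\<^sup>2 - sn\<^sup>2), \<i> * cr (2 * sn * cn))
           (- \<i> * cr (2 * sn * cn) * cr (2 * pi * (b0 \<bullet> (\<i> * v))),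
            \<i> * cr (cn\<^sup>2 - sn\<^sup>2) * cr (2 * pi * (b0 \<bullet> (\<i> * v)))))
    = - qmul (qmul (cr cn, cr sn) (v, 0)) (cr pi * \<i> * cnj b0 * cr sn, - cr pi * \<i> * b0 * cr cn)"
proof -
  have cs: "cr cn ^ 2 + cr sn ^ 2 = 1"
    using assms by (metis of_real_add of_real_power of_real_1)
  show ?thesis
    apply (simp add: qmul_def of_real_inner_complex scaleR_conv_of_real)
    apply (rule conjI)
    using cs by (simp add: field_simps power2_eq_square; algebra)+
qed

definition hopf_X :: "complex \<Rightarrow> complex \<Rightarrow> quat" where
  "hopf_X b0 z = (cr pi * \<i> * cnj b0 * cr (sin (pi * (b0 \<bullet> z))),
                  - cr pi * \<i> * b0 * cr (cos (pi * (b0 \<bullet> z))))"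

lemma dN_prime_eq:
  "dN_prime b0 z v = - qmul (qmul (qexpj (hs_beta b0 z / 2)) (v, 0)) (hopf_X b0 z)"
proof -
  have "(cos (pi * (b0 \<bullet> z)))\<^sup>2 + (sin (pi * (b0 \<bullet> z)))\<^sup>2 = 1"
    by simp
  from dN_prime_identity [OF this, of b0 v] show ?thesis
    unfolding dN_prime_def hodge_def dform_eq_derivative [OF hs_N_has_derivative]
      hs_N_half_angle hopf_X_def qexpj_half_beta
    unfolding hs_beta_double cos_double sin_double
    by simp
qed

lemma hs_H_eq:
  assumes f: "(f has_derivative (\<lambda>v. qmul (qmul (qexpj (hs_beta b0 z / 2)) (of_cplx v)) (g z))) (at z)"
    and g: "g z \<noteq> 0"
  shows "hs_H b0 f z = qmul (qinv (g z)) (hopf_X b0 z)"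
proof -
  define E where "E = qexpj (hs_beta b0 z / 2)"
  define h0 where "h0 = qmul (qinv (g z)) (hopf_X b0 z)"
  have df: "dform f z w = qmul (qmul E (w, 0)) (g z)" for w
    by (simp add: dform_eq_derivative [OF f] E_def of_cplx_def)
  have df_h0: "qmul (dform f z w) h0 = qmul (qmul E (w, 0)) (hopf_X b0 z)" for w
    by (simp add: df h0_def qmul_assoc qmul_qinv_right_cancel [OF g])
  have "E \<noteq> 0"
    using sin_zero_abs_cos_one [of "pi * (b0 \<bullet> z)"]
    by (auto simp: E_def qexpj_half_beta zero_prod_def)
  then have df1: "dform f z 1 \<noteq> 0"
    using qmul_nonzero [OF _ g] by (simp add: df qmul_def)
  show ?thesis
    unfolding hs_H_def h0_def [symmetric]
  proof (rule the_equality)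
    show "\<forall>w. dN_prime b0 z w = - qmul (dform f z w) h0"
      by (simp add: df_h0 dN_prime_eq E_def)
  next
    fix h
    assume "\<forall>w. dN_prime b0 z w = - qmul (dform f z w) h"
    then have "qmul (dform f z 1) h = qmul (dform f z 1) h0"
      by (metis df_h0 dN_prime_eq E_def minus_equation_iff)
    then show "h = h0"
      by (rule qmul_left_cancel [OF df1])
  qed
qed

lemma dform_mul_hs_H:
  assumes "(f has_derivative (\<lambda>v. qmul (qmul (qexpj (hs_beta b0 z / 2)) (of_cplx v)) (g z))) (at z)"
    and "g z \<noteq> 0"
  shows "qmul (dform f z v) (hs_H b0 f z) = qmul (qmul (qexpj (hs_beta b0 z / 2)) (v, 0)) (hopf_X b0 z)"
  using assms
  by (simp add: hs_H_eq dform_eq_derivative of_cplx_def qmul_assoc qmul_qinv_right_cancel)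

definition mono_phase :: "complex \<Rightarrow> complex \<Rightarrow> complex \<Rightarrow> complex \<Rightarrow> complex" where
  "mono_phase D A c z = e_char D z * cr (exp (2 * pi * (A \<bullet> z))) * c"

text \<open>\<open>e^(j\<beta>/2) (1 - k l) e_D e^(2\<pi>\<langle>A,\<cdot>\<rangle>) c\<close> written out in components; in the paper
  \<open>D = \<delta> - B\<close> and \<open>l = \<lambda>\<^sub>\<delta>\<close>.\<close>
definition mono_section :: "complex \<Rightarrow> complex \<Rightarrow> complex \<Rightarrow> complex \<Rightarrow> complex \<Rightarrow> complex \<Rightarrow> quat" where
  "mono_section l b0 D A c z =
     ((cr (cos (pi * (b0 \<bullet> z))) - \<i> * l * cr (sin (pi * (b0 \<bullet> z)))) * mono_phase D A c z,
      (\<i> * l * cr (cos (pi * (b0 \<bullet> z))) + cr (sin (pi * (b0 \<bullet> z)))) * mono_phase D A c z)"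

lemma mono_phase_eq_exp:
  "mono_phase D A c = (\<lambda>z. c * exp (cr (2 * pi * (A \<bullet> z)) + 2 * cr pi * \<i> * cr (D \<bullet> z)))"
proof
  fix z
  have "cr (exp (2 * pi * (A \<bullet> z))) = exp (cr (2 * pi * (A \<bullet> z)))"
    by (simp only: exp_of_real)
  then show "mono_phase D A c z = c * exp (cr (2 * pi * (A \<bullet> z)) + 2 * cr pi * \<i> * cr (D \<bullet> z))"
    unfolding mono_phase_def e_char_def exp_add by (simp add: algebra_simps)
qed

lemma mono_phase_has_derivative:
  "(mono_phase D A c has_derivative
      (\<lambda>v. mono_phase D A c z * (2 * cr pi * \<i> * cr (D \<bullet> v) + 2 * cr pi * cr (A \<bullet> v)))) (at z)"
proof -
  let ?Q = "\<lambda>z. cr (2 * pi * (A \<bullet> z)) + 2 * cr pi * \<i> * cr (D \<bullet> z)"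
  have Q: "(?Q has_derivative ?Q) (at z)"
    by (rule has_derivative_eq_rhs, (rule derivative_eq_intros refl)+, auto simp: algebra_simps)
  have "(exp has_derivative (\<lambda>h. exp (?Q z) * h)) (at (?Q z))"
    using DERIV_exp [of "?Q z"] by (simp add: has_field_derivative_def)
  from diff_chain_at [OF Q this]
  have "((\<lambda>z. c * exp (?Q z)) has_derivative (\<lambda>v. c * (exp (?Q z) * ?Q v))) (at z)"
    using has_derivative_mult_right [of "exp \<circ> ?Q" _ _ c] by (simp add: o_def)
  then show ?thesis
    unfolding mono_phase_eq_exp by (rule has_derivative_eq_rhs) (auto simp: algebra_simps)
qed

lemma mono_section_has_derivative:
  "(mono_section l b0 D A c has_derivative (\<lambda>v.
     ((- cr (sin (pi * (b0 \<bullet> z))) * cr pi * cr (b0 \<bullet> v)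
         - \<i> * l * (cr (cos (pi * (b0 \<bullet> z))) * cr pi * cr (b0 \<bullet> v))) * mono_phase D A c z
      + (cr (cos (pi * (b0 \<bullet> z))) - \<i> * l * cr (sin (pi * (b0 \<bullet> z))))
          * (mono_phase D A c z * (2 * cr pi * \<i> * cr (D \<bullet> v) + 2 * cr pi * cr (A \<bullet> v))),
      (\<i> * l * (- cr (sin (pi * (b0 \<bullet> z))) * cr pi * cr (b0 \<bullet> v))
         + cr (cos (pi * (b0 \<bullet> z))) * cr pi * cr (b0 \<bullet> v)) * mono_phase D A c z
      + (\<i> * l * cr (cos (pi * (b0 \<bullet> z))) + cr (sin (pi * (b0 \<bullet> z))))
          * (mono_phase D A c z * (2 * cr pi * \<i> * cr (D \<bullet> v) + 2 * cr pi * cr (A \<bullet> v)))))) (at z)"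
  unfolding mono_section_def [abs_def]
  by (rule has_derivative_eq_rhs,
      (rule derivative_eq_intros mono_phase_has_derivative refl)+, auto simp: algebra_simps)

lemma Gamma_AB_relation:
  assumes "\<delta> \<in> Gamma_AB \<Gamma> b0 A B"
  shows "(\<delta> - B - \<i> * A) * (cnj (\<delta> - B) - \<i> * cnj A) = b0 * cnj b0 / 4"
proof -
  define D where "D = \<delta> - B"
  from assms have norms: "(cmod D)\<^sup>2 - (cmod A)\<^sup>2 = (cmod b0)\<^sup>2 / 4" and orth: "D \<bullet> A = 0"
    by (simp_all add: Gamma_AB_def D_def)
  have "cr ((cmod D)\<^sup>2) - cr ((cmod A)\<^sup>2) = cr ((cmod b0)\<^sup>2) / 4"
    using arg_cong [OF norms, of cr] by (simp only: of_real_diff of_real_divide of_real_numeral)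
  then have "D * cnj D - A * cnj A = b0 * cnj b0 / 4"
    by (simp only: complex_norm_square)
  moreover have "D * cnj A + cnj D * A = 0"
    using arg_cong [OF orth, of cr] by (simp add: of_real_inner_complex)
  moreover have "(D - \<i> * A) * (cnj D - \<i> * cnj A) = (D * cnj D - A * cnj A) - \<i> * (D * cnj A + cnj D * A)"
    by (simp add: algebra_simps)
  ultimately show ?thesis
    by (simp add: D_def)
qed

lemma monochromatic_obtain_mono_section:
  assumes "monochromatic \<Gamma> b0 \<alpha>" and b0: "b0 \<noteq> 0"
  obtains l D A c where "c \<noteq> 0" and "l \<noteq> 0" and "l * b0 = 2 * (D - \<i> * A)"
    and "(D - \<i> * A) * (cnj D - \<i> * cnj A) = b0 * cnj b0 / 4"
    and "\<alpha> = mono_section l b0 D A c"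
proof -
  from assms(1) obtain A B \<delta> c where \<delta>: "\<delta> \<in> Gamma_AB \<Gamma> b0 A B" and c: "c \<noteq> 0"
    and \<alpha>: "\<alpha> = (\<lambda>z. qmul (qmul (qmul (qmul (qexpj (hs_beta b0 z / 2))
                     (qone - qmul qk (of_cplx (lambda_delta b0 A B \<delta>))))
                     (of_cplx (e_char (\<delta> - B) z)))
                     (of_cplx (cr (exp (2 * pi * (A \<bullet> z))))))
                     (of_cplx c))"
    unfolding monochromatic_def by blast
  define l where "l = lambda_delta b0 A B \<delta>"
  have lb: "l * b0 = 2 * (\<delta> - B - \<i> * A)"
    using b0 by (simp add: l_def lambda_delta_def field_simps)
  have rel: "(\<delta> - B - \<i> * A) * (cnj (\<delta> - B) - \<i> * cnj A) = b0 * cnj b0 / 4"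
    using Gamma_AB_relation [OF \<delta>] .
  have "l \<noteq> 0"
  proof
    assume "l = 0"
    then have "\<delta> - B - \<i> * A = 0"
      using lb by (metis mult_eq_0_iff mult_zero_left zero_neq_numeral)
    then show False
      using rel b0 by simp
  qed
  moreover have "\<alpha> = mono_section l b0 (\<delta> - B) A c"
    unfolding \<alpha> qexpj_half_beta mono_section_def mono_phase_def l_def
    by (simp add: qmul_def qone_def qk_def qi_def qj_def of_cplx_def algebra_simps)
  ultimately show ?thesis
    using that c lb rel by blast
qed

text \<open>\<open>d\<^sup>\<mu>\<close> of \<open>mono_section\<close> at a point, with \<open>cos (\<pi> b0\<cdot>z)\<close>, \<open>sin (\<pi> b0\<cdot>z)\<close> and the phase
  abstracted to \<open>cn\<close>, \<open>sn\<close>, \<open>ph\<close>, so that the algebra only needs \<open>cn\<^sup>2 + sn\<^sup>2 = 1\<close>.\<close>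
definition d_mu_expr ::
    "real \<Rightarrow> real \<Rightarrow> complex \<Rightarrow> complex \<Rightarrow> complex \<Rightarrow> complex \<Rightarrow> complex \<Rightarrow> complex \<Rightarrow> complex \<Rightarrow> quat"
  where
  "d_mu_expr cn sn b0 D A l mu ph v = (let C = cr cn; S = cr sn;
     P = 2 * cr pi * \<i> * cr (D \<bullet> v) + 2 * cr pi * cr (A \<bullet> v);
     C' = - S * cr pi * cr (b0 \<bullet> v); S' = C * cr pi * cr (b0 \<bullet> v);
     M = qmul (qmul (C, S) (v, 0)) (cr pi * \<i> * cnj b0 * S, - cr pi * \<i> * b0 * C);
     \<alpha> = ((C - \<i> * l * S) * ph, (\<i> * l * C + S) * ph);
     N = (\<i> * (C\<^sup>2 - S\<^sup>2), \<i> * (2 * S * C))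
   in ((C' - \<i> * l * S') * ph + (C - \<i> * l * S) * (ph * P),
       (\<i> * l * C' + S') * ph + (\<i> * l * C + S) * (ph * P))
     + (1/2::real) *\<^sub>R qmul M (qmul (qmul N \<alpha>) (of_cplx (mu_a mu - 1)) + qmul \<alpha> (of_cplx (mu_b mu))))"

lemma d_mu_mono_section:
  assumes "ham_stat_torus \<Gamma> b0 f g"
  shows "d_mu b0 f mu (mono_section l b0 D A c) z v
     = d_mu_expr (cos (pi * (b0 \<bullet> z))) (sin (pi * (b0 \<bullet> z))) b0 D A l mu (mono_phase D A c z) v"
proof -
  from assms have "qmul (dform f z v) (hs_H b0 f z)
      = qmul (qmul (qexpj (hs_beta b0 z / 2)) (v, 0)) (hopf_X b0 z)"
    by (intro dform_mul_hs_H [where g = g]) (simp_all add: ham_stat_torus_def)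
  then show ?thesis
    unfolding d_mu_def dform_eq_derivative [OF mono_section_has_derivative]
      d_mu_expr_def Let_def hs_N_half_angle qexpj_half_beta hopf_X_def
    by (simp add: mono_section_def)
qed

lemma d_mu_expr_eq_zero:
  fixes cn sn :: real
  assumes cs: "cn\<^sup>2 + sn\<^sup>2 = 1"
    and lb: "l * b0 = 2 * (D - \<i> * A)"
    and rel: "(D - \<i> * A) * (cnj D - \<i> * cnj A) = b0 * cnj b0 / 4"
    and mu: "mu * l\<^sup>2 = 1" and b0: "b0 \<noteq> 0"
  shows "d_mu_expr cn sn b0 D A l mu ph v = 0"
proof -
  have cs': "cr cn ^ 2 + cr sn ^ 2 = 1"
    using cs by (metis of_real_add of_real_power of_real_1)
  have i2: "\<i> * \<i> = -1"
    by simp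
  have bi: "b0 * inverse b0 = 1"
    using b0 by simp
  have mi: "inverse mu = l\<^sup>2"
    using mu by (metis inverse_unique mult.commute)
  show ?thesis
    unfolding d_mu_expr_def Let_def
    apply (simp add: qmul_def of_real_inner_complex scaleR_conv_of_real of_cplx_def mu_a_def mu_b_def
        mi zero_prod_def)
    apply (rule conjI)
    using cs' lb rel bi mu i2 by (simp add: field_simps power2_eq_square; algebra)+
qed

lemma snd_d_mu_expr_at_origin:
  assumes lb: "l * b0 = 2 * (D - \<i> * A)"
    and rel: "(D - \<i> * A) * (cnj D - \<i> * cnj A) = b0 * cnj b0 / 4"
    and b0: "b0 \<noteq> 0"
  shows "snd (d_mu_expr 1 0 b0 D A l mu ph v) = cr pi * ph * b0 * (inverse mu - l\<^sup>2) * cnj v / 2"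
proof -
  have i2: "\<i> * \<i> = -1"
    by simp
  have bi: "b0 * inverse b0 = 1"
    using b0 by simp
  show ?thesis
    unfolding d_mu_expr_def Let_def
    apply (simp add: qmul_def of_real_inner_complex scaleR_conv_of_real of_cplx_def mu_a_def mu_b_def)
    using lb rel bi i2 by (simp add: field_simps power2_eq_square; algebra)
qed

lemma d_mu_parallel_mono_section_iff:
  assumes f: "ham_stat_torus \<Gamma> b0 f g"
    and lb: "l * b0 = 2 * (D - \<i> * A)"
    and rel: "(D - \<i> * A) * (cnj D - \<i> * cnj A) = b0 * cnj b0 / 4"
    and c: "c \<noteq> 0" and mu: "mu \<noteq> 0"
  shows "d_mu_parallel b0 f mu (mono_section l b0 D A c) \<longleftrightarrow> mu * l\<^sup>2 = 1"
proof
  have b0: "b0 \<noteq> 0"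
    using f by (simp add: ham_stat_torus_def)
  {
    assume "d_mu_parallel b0 f mu (mono_section l b0 D A c)"
    then have "d_mu_expr 1 0 b0 D A l mu (mono_phase D A c 0) 1 = 0"
      using d_mu_mono_section [OF f, of mu l D A c 0 1] by (simp add: d_mu_parallel_def)
    then have "cr pi * c * b0 * (inverse mu - l\<^sup>2) / 2 = 0"
      using snd_d_mu_expr_at_origin [OF lb rel b0, of mu "mono_phase D A c 0" 1]
      by (simp add: mono_phase_def e_char_def)
    with c b0 mu show "mu * l\<^sup>2 = 1"
      by (simp add: field_simps)
  }
  assume "mu * l\<^sup>2 = 1"
  moreover have "mono_section l b0 D A c differentiable (at z)" for z
    using mono_section_has_derivative by (rule differentiableI)
  ultimately show "d_mu_parallel b0 f mu (mono_section l b0 D A c)"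
    using d_mu_expr_eq_zero [OF _ lb rel _ b0] by (simp add: d_mu_parallel_def d_mu_mono_section [OF f])
qed

theorem lemma5p3:
  fixes \<Gamma> :: "complex set" and \<beta>0 :: complex and f g \<alpha> :: "complex \<Rightarrow> quat"
  assumes "ham_stat_torus \<Gamma> \<beta>0 f g"
    and "monochromatic \<Gamma> \<beta>0 \<alpha>"
  shows "\<exists>!\<mu>. \<mu> \<noteq> 0 \<and> d_mu_parallel \<beta>0 f \<mu> \<alpha>"
proof -
  have "\<beta>0 \<noteq> 0"
    using assms(1) by (simp add: ham_stat_torus_def)
  with assms(2) obtain l D A c where c: "c \<noteq> 0" and l: "l \<noteq> 0"
    and lb: "l * \<beta>0 = 2 * (D - \<i> * A)"
    and rel: "(D - \<i> * A) * (cnj D - \<i> * cnj A) = \<beta>0 * cnj \<beta>0 / 4"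
    and \<alpha>: "\<alpha> = mono_section l \<beta>0 D A c"
    by (rule monochromatic_obtain_mono_section)
  have "\<mu> \<noteq> 0 \<and> d_mu_parallel \<beta>0 f \<mu> \<alpha> \<longleftrightarrow> \<mu> * l\<^sup>2 = 1" for \<mu>
    using d_mu_parallel_mono_section_iff [OF assms(1) lb rel c, of \<mu>]
    by (cases "\<mu> = 0") (auto simp: \<alpha>)
  moreover have "\<mu> * l\<^sup>2 = 1 \<longleftrightarrow> \<mu> = inverse (l\<^sup>2)" for \<mu>
    using l by (auto simp: field_simps)
  ultimately show ?thesis
    by auto
qed

end
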